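(* Fix $a>0$, $b>0$, $c>0$, $\theta>0$ with $\zeta:=\frac{b^2-a(c-\theta)}{a^2}<0$. Let $\kappa=b/a$, $s=\sqrt{-\zeta}$, $z=\frac{c-\theta}{b}$, $p=\frac{b^2}{a(c-\theta)}$, $\bar x=\max\{0,\kappa-\frac{\theta}{2as}\}$, and $$\bar a_M=\frac{\Bigl(b+c^2-3c\theta+2\theta^2+\sqrt{b(b-2c\theta+2\theta^2)}\Bigr)b^2}{(c-\theta)^3}.$$ (Symmetric branch) If $a\le\frac{2b^2}{c-\theta}$, $P(0,\kappa-s)\ge0$ and $P(\bar x,\kappa+s)\ge0$, then the profile in which both players assign probability $\tfrac12$ to each of $\kappa-s$, $\kappa+s$ is an on-domain mixed equilibrium of the truncated contest. (Endpoint branch) If $\frac{2b^2}{c-\theta}\le a\le\bar a_M$, then the profile in which both players assign probability $1-p$ to $0$ and $p$ to $z$ is an on-domain mixed equilibrium of the truncated contest. Wherever the relevant branch condition holds, the equilibrium has $E[x]=E[y]=\kappa$, $\operatorname{Var}(x)=\operatorname{Var}(y)=-\zeta$, and common payoff $\tfrac12-\theta\kappa$.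
   Context: $P(x,y)=\tfrac12+(x-y)\bigl(c-b(x+y)+axy\bigr)$, $\bar P=\min\{1,\max\{0,P\}\}$. The truncated contest is the two-player complete-information game with efforts $x,y\ge0$ and payoffs $\bar P(x,y)-\theta x$ for $X$ and $1-\bar P(x,y)-\theta y$ for $Y$. An equilibrium is on-domain if $0\le P(x,y)\le1$ (so $\bar P=P$) for all pairs $(x,y)$ in the product of the supports of the equilibrium strategies. The condition $a\le\bar a_M$ is understood to require $\bar a_M$ to be a real number. *)

theory Defs
  imports "HOL-Probability.Probability"
begin

definition Pc :: "real \<Rightarrow> real \<Rightarrow> real \<Rightarrow> real \<Rightarrow> real \<Rightarrow> real" where
  "Pc a b c x y = 1/2 + (x - y) * (c - b * (x + y) + a * x * y)"

definition Pbar :: "real \<Rightarrow> real \<Rightarrow> real \<Rightarrow> real \<Rightarrow> real \<Rightarrow> real" where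
  "Pbar a b c x y = min 1 (max 0 (Pc a b c x y))"

definition payX :: "real \<Rightarrow> real \<Rightarrow> real \<Rightarrow> real \<Rightarrow> real \<Rightarrow> real \<Rightarrow> real" where
  "payX a b c \<theta> x y = Pbar a b c x y - \<theta> * x"

definition payY :: "real \<Rightarrow> real \<Rightarrow> real \<Rightarrow> real \<Rightarrow> real \<Rightarrow> real \<Rightarrow> real" where
  "payY a b c \<theta> x y = 1 - Pbar a b c x y - \<theta> * y"

definition EpayX :: "real \<Rightarrow> real \<Rightarrow> real \<Rightarrow> real \<Rightarrow> real pmf \<Rightarrow> real pmf \<Rightarrow> real" where
  "EpayX a b c \<theta> \<sigma> \<tau> =
     measure_pmf.expectation (pair_pmf \<sigma> \<tau>) (\<lambda>(x, y). payX a b c \<theta> x y)"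

definition EpayY :: "real \<Rightarrow> real \<Rightarrow> real \<Rightarrow> real \<Rightarrow> real pmf \<Rightarrow> real pmf \<Rightarrow> real" where
  "EpayY a b c \<theta> \<sigma> \<tau> =
     measure_pmf.expectation (pair_pmf \<sigma> \<tau>) (\<lambda>(x, y). payY a b c \<theta> x y)"

definition mixed_equilibrium ::
  "real \<Rightarrow> real \<Rightarrow> real \<Rightarrow> real \<Rightarrow> real pmf \<Rightarrow> real pmf \<Rightarrow> bool" where
  "mixed_equilibrium a b c \<theta> \<sigma> \<tau> \<longleftrightarrow>
     finite (set_pmf \<sigma>) \<and> finite (set_pmf \<tau>) \<and>
     set_pmf \<sigma> \<subseteq> {0..} \<and> set_pmf \<tau> \<subseteq> {0..} \<and>
     (\<forall>x'\<ge>0. EpayX a b c \<theta> (return_pmf x') \<tau> \<le> EpayX a b c \<theta> \<sigma> \<tau>) \<and>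
     (\<forall>y'\<ge>0. EpayY a b c \<theta> \<sigma> (return_pmf y') \<le> EpayY a b c \<theta> \<sigma> \<tau>)"

definition on_domain :: "real \<Rightarrow> real \<Rightarrow> real \<Rightarrow> real pmf \<Rightarrow> real pmf \<Rightarrow> bool" where
  "on_domain a b c \<sigma> \<tau> \<longleftrightarrow>
     (\<forall>x\<in>set_pmf \<sigma>. \<forall>y\<in>set_pmf \<tau>. 0 \<le> Pc a b c x y \<and> Pc a b c x y \<le> 1)"

definition two_point :: "real \<Rightarrow> real \<Rightarrow> real \<Rightarrow> real pmf" where
  "two_point q u v = map_pmf (\<lambda>t. if t then v else u) (bernoulli_pmf q)"

end

theory Submission
  imports Defs
begin

(* Since P(x,y) = 1/2 + (a y - b) x^2 + (c - a y^2) x + y (b y - c) is affine in y and y^2, a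
   player facing a strategy with a E[y] = b and a E[y^2] = c - theta (mean kappa, variance -zeta)
   has unclipped winning probability exactly 1/2 + theta (x - kappa): every effort earns the same
   unclipped payoff 1/2 - theta kappa. Truncation only lowers a deviator's winning probability
   where P < 0; for both two-point profiles P(x, upper atom) >= 0 for all x >= 0 (a convex
   quadratic in x, controlled at its clamped vertex, resp. by its discriminant, which is where
   a <= aM enters), and P(x, lower atom) < 0 forces x > kappa, where deviating loses anyway.
   Finally Pbar(x,y) + Pbar(y,x) = 1, so in a symmetric profile the expected winning probability
   is 1/2 and the equilibrium payoff is 1/2 - theta kappa. *)

lemma Pc_swap: "Pc a b c y x = 1 - Pc a b c x y"
  unfolding Pc_def by (simp add: algebra_simps)

lemma Pbar_swap: "Pbar a b c y x = 1 - Pbar a b c x y"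
  unfolding Pbar_def Pc_swap[of a b c y x] by (simp add: min_def max_def)

lemma Pc_diag: "Pc a b c x x = 1/2"
  unfolding Pc_def by simp

lemma Pc_as_quadratic:
  "Pc a b c x y = 1/2 + (a * y - b) * x^2 + (c - a * y^2) * x + y * (b * y - c)"
  unfolding Pc_def by (simp add: power2_eq_square algebra_simps)

lemma integrable_Pbar: "integrable (measure_pmf M) (\<lambda>t. Pbar a b c (f t) (g t))"
  by (rule measure_pmf.integrable_const_bound[where B = 1]) (auto simp: Pbar_def)

lemma expectation_pair_Pbar_self:
  "measure_pmf.expectation (pair_pmf \<sigma> \<sigma>) (\<lambda>(x, y). Pbar a b c x y) = 1/2"
proof -
  let ?E = "measure_pmf.expectation (pair_pmf \<sigma> \<sigma>)"
  have int: "integrable (pair_pmf \<sigma> \<sigma>) (\<lambda>(x, y). Pbar a b c x y)"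
    using integrable_Pbar[of _ a b c fst snd] by (simp add: case_prod_unfold)
  have "?E (\<lambda>(x, y). Pbar a b c x y) = ?E (\<lambda>(x, y). Pbar a b c y x)"
    by (subst pair_commute_pmf) (simp add: case_prod_unfold)
  also have "\<dots> = ?E (\<lambda>xy. 1 - (\<lambda>(x, y). Pbar a b c x y) xy)"
    by (rule Bochner_Integration.integral_cong) (auto intro: Pbar_swap)
  also have "\<dots> = 1 - ?E (\<lambda>(x, y). Pbar a b c x y)"
    using int by simp
  finally show ?thesis by simp
qed

lemma EpayX_self:
  assumes "finite (set_pmf \<sigma>)"
  shows "EpayX a b c \<theta> \<sigma> \<sigma> = 1/2 - \<theta> * measure_pmf.expectation \<sigma> (\<lambda>x. x)"
proof -
  let ?\<pi> = "pair_pmf \<sigma> \<sigma>"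
  have fst: "measure_pmf.expectation ?\<pi> fst = measure_pmf.expectation \<sigma> (\<lambda>x. x)"
    using integral_map_pmf[of fst ?\<pi> "\<lambda>x. x"] by (simp add: map_fst_pair_pmf)
  have "integrable (measure_pmf ?\<pi>) fst"
    using assms by (intro integrable_measure_pmf_finite) simp
  then have "EpayX a b c \<theta> \<sigma> \<sigma> =
      measure_pmf.expectation ?\<pi> (\<lambda>(x, y). Pbar a b c x y) - \<theta> * measure_pmf.expectation ?\<pi> fst"
    unfolding EpayX_def payX_def case_prod_unfold
    using integrable_Pbar[of ?\<pi> a b c fst snd] by simp
  then show ?thesis
    unfolding fst expectation_pair_Pbar_self .
qed

lemma EpayY_self:
  assumes "finite (set_pmf \<sigma>)"
  shows "EpayY a b c \<theta> \<sigma> \<sigma> = 1/2 - \<theta> * measure_pmf.expectation \<sigma> (\<lambda>x. x)"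
proof -
  let ?\<pi> = "pair_pmf \<sigma> \<sigma>"
  have snd: "measure_pmf.expectation ?\<pi> snd = measure_pmf.expectation \<sigma> (\<lambda>x. x)"
    using integral_map_pmf[of snd ?\<pi> "\<lambda>x. x"] by (simp add: map_snd_pair_pmf)
  have "integrable (measure_pmf ?\<pi>) snd"
    using assms by (intro integrable_measure_pmf_finite) simp
  then have "EpayY a b c \<theta> \<sigma> \<sigma> =
      1 - measure_pmf.expectation ?\<pi> (\<lambda>(x, y). Pbar a b c x y) - \<theta> * measure_pmf.expectation ?\<pi> snd"
    unfolding EpayY_def payY_def case_prod_unfold
    using integrable_Pbar[of ?\<pi> a b c fst snd] by simp
  then show ?thesis
    unfolding snd expectation_pair_Pbar_self by simp
qed

lemma EpayX_return:
  "EpayX a b c \<theta> (return_pmf x) \<tau> = measure_pmf.expectation \<tau> (\<lambda>y. Pbar a b c x y) - \<theta> * x"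
  unfolding EpayX_def payX_def pair_return_pmf1
  using integrable_Pbar[of \<tau> a b c "\<lambda>_. x" "\<lambda>y. y"] by simp

lemma EpayY_return:
  "EpayY a b c \<theta> \<sigma> (return_pmf y) = measure_pmf.expectation \<sigma> (\<lambda>x. Pbar a b c y x) - \<theta> * y"
proof -
  have "EpayY a b c \<theta> \<sigma> (return_pmf y) = measure_pmf.expectation \<sigma> (\<lambda>x. Pbar a b c y x - \<theta> * y)"
    unfolding EpayY_def payY_def pair_return_pmf2
    by (simp add: Pbar_swap[of a b c y])
  then show ?thesis
    using integrable_Pbar[of \<sigma> a b c "\<lambda>_. y" "\<lambda>x. x"] by simp
qed

lemma mixed_equilibrium_symmetricI:
  assumes "finite (set_pmf \<sigma>)" and "set_pmf \<sigma> \<subseteq> {0..}"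
    and "\<And>x. 0 \<le> x \<Longrightarrow> measure_pmf.expectation \<sigma> (\<lambda>y. Pbar a b c x y) - \<theta> * x
                       \<le> 1/2 - \<theta> * measure_pmf.expectation \<sigma> (\<lambda>y. y)"
  shows "mixed_equilibrium a b c \<theta> \<sigma> \<sigma>"
  using assms unfolding mixed_equilibrium_def
  by (simp add: EpayX_return EpayY_return EpayX_self EpayY_self)

lemma expectation_Pc:
  assumes "finite (set_pmf \<sigma>)"
    and mean: "a * measure_pmf.expectation \<sigma> (\<lambda>y. y) = b"
    and second: "a * measure_pmf.expectation \<sigma> (\<lambda>y. y^2) = c - \<theta>"
  shows "measure_pmf.expectation \<sigma> (\<lambda>y. Pc a b c x y)
           = 1/2 + \<theta> * (x - measure_pmf.expectation \<sigma> (\<lambda>y. y))"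
proof -
  define m1 where "m1 = measure_pmf.expectation \<sigma> (\<lambda>y. y)"
  define m2 where "m2 = measure_pmf.expectation \<sigma> (\<lambda>y. y^2)"
  have "measure_pmf.expectation \<sigma> (\<lambda>y. Pc a b c x y) =
      measure_pmf.expectation \<sigma> (\<lambda>y. (1/2 - b * x^2 + c * x) + (a * x^2 - c) * y + (b - a * x) * y^2)"
    unfolding Pc_as_quadratic by (simp add: power2_eq_square algebra_simps)
  also have "\<dots> = (1/2 - b * x^2 + c * x) + (a * x^2 - c) * m1 + (b - a * x) * m2"
    using assms(1) unfolding m1_def m2_def
    by (simp add: integrable_measure_pmf_finite)
  also have "\<dots> = 1/2 + \<theta> * (x - m1)"
  proof -
    have "b = a * m1" "c = a * m2 + \<theta>"
      using mean second unfolding m1_def m2_def by simp_all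
    then show ?thesis by (simp add: algebra_simps)
  qed
  finally show ?thesis unfolding m1_def .
qed

lemma set_pmf_two_point: "set_pmf (two_point q u v) \<subseteq> {u, v}"
  unfolding two_point_def by auto

lemma expectation_two_point:
  assumes "0 \<le> q" "q \<le> 1"
  shows "measure_pmf.expectation (two_point q u v) f = (1 - q) * f u + q * f v"
  unfolding two_point_def using assms by simp

lemma variance_two_point:
  assumes "0 \<le> q" "q \<le> 1"
  shows "measure_pmf.variance (two_point q u v) (\<lambda>x. x) = q * (1 - q) * (v - u)^2"
  using assms by (simp add: expectation_two_point power2_eq_square algebra_simps)

lemma on_domain_two_point:
  assumes "0 \<le> Pc a b c u v" and "Pc a b c u v \<le> 1"
  shows "on_domain a b c (two_point q u v) (two_point q u v)"
  unfolding on_domain_def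
proof (intro ballI)
  fix x y assume "x \<in> set_pmf (two_point q u v)" "y \<in> set_pmf (two_point q u v)"
  then have "x \<in> {u, v}" "y \<in> {u, v}" using set_pmf_two_point by auto
  then show "0 \<le> Pc a b c x y \<and> Pc a b c x y \<le> 1"
    using assms by (auto simp: Pc_diag Pc_swap[of a b c v u])
qed

lemma clamped_average_le:
  fixes q s t L :: real
  assumes q: "0 \<le> q" "q \<le> 1" and avg: "(1 - q) * s + q * t = L"
    and "s < 0 \<Longrightarrow> q \<le> L" and "t < 0 \<Longrightarrow> 1 - q \<le> L"
  shows "(1 - q) * min 1 (max 0 s) + q * min 1 (max 0 t) \<le> L"
proof -
  have s_le: "(1 - q) * min 1 (max 0 s) \<le> (if s < 0 then 0 else min (1 - q) ((1 - q) * s))"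
    using q by (auto simp: min_def max_def mult_left_le mult_le_cancel_left1)
  have t_le: "q * min 1 (max 0 t) \<le> (if t < 0 then 0 else min q (q * t))"
    using q by (auto simp: min_def max_def mult_left_le mult_le_cancel_left1)
  show ?thesis
    using s_le t_le assms by (auto split: if_splits)
qed

definition symmetric_on_domain_equilibrium ::
  "real \<Rightarrow> real \<Rightarrow> real \<Rightarrow> real \<Rightarrow> real pmf \<Rightarrow> real \<Rightarrow> real \<Rightarrow> bool" where
  "symmetric_on_domain_equilibrium a b c \<theta> \<sigma> m V \<longleftrightarrow>
     mixed_equilibrium a b c \<theta> \<sigma> \<sigma> \<and> on_domain a b c \<sigma> \<sigma>
     \<and> measure_pmf.expectation \<sigma> (\<lambda>x. x) = m
     \<and> measure_pmf.variance \<sigma> (\<lambda>x. x) = V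
     \<and> EpayX a b c \<theta> \<sigma> \<sigma> = 1/2 - \<theta> * m
     \<and> EpayY a b c \<theta> \<sigma> \<sigma> = 1/2 - \<theta> * m"

lemma symmetric_on_domain_equilibrium_two_pointI:
  fixes q u v m :: real
  assumes q: "0 < q" "q \<le> 1/2" and uv: "0 \<le> u" "u \<le> v" and \<theta>: "0 \<le> \<theta>"
    and mean: "(1 - q) * u + q * v = m" "a * m = b"
    and second: "a * ((1 - q) * u^2 + q * v^2) = c - \<theta>"
    and lower: "\<And>x. 0 \<le> x \<Longrightarrow> x \<le> m \<Longrightarrow> 0 \<le> Pc a b c x u"
    and upper: "\<And>x. 0 \<le> x \<Longrightarrow> 0 \<le> Pc a b c x v"
  shows "symmetric_on_domain_equilibrium a b c \<theta> (two_point q u v) m (q * (1 - q) * (v - u)^2)"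
proof -
  let ?\<sigma> = "two_point q u v"
  have E: "measure_pmf.expectation ?\<sigma> f = (1 - q) * f u + q * f v" for f
    using q by (intro expectation_two_point) auto
  have supp: "set_pmf ?\<sigma> \<subseteq> {u, v}"
    by (rule set_pmf_two_point)
  have fin: "finite (set_pmf ?\<sigma>)"
    using supp by (rule finite_subset) simp
  have Em: "measure_pmf.expectation ?\<sigma> (\<lambda>x. x) = m"
    using mean by (simp add: E)
  have avg: "(1 - q) * Pc a b c x u + q * Pc a b c x v = 1/2 + \<theta> * (x - m)" for x
    using expectation_Pc[OF fin, of a b c \<theta> x] mean second by (simp add: E)
  have Puv: "0 \<le> Pc a b c u v" "Pc a b c u v \<le> 1"
  proof -
    show "0 \<le> Pc a b c u v" using upper uv by simp
    have "m - u = q * (v - u)" using mean(1) by (simp add: algebra_simps)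
    moreover have "0 \<le> q * (v - u)" using q uv by simp
    ultimately have "u \<le> m" by simp
    then have "\<theta> * (u - m) \<le> 0" using \<theta> by (simp add: mult_nonneg_nonpos)
    moreover have "q * Pc a b c u v = q * (1/2) + \<theta> * (u - m)"
      using avg[of u] unfolding Pc_diag by (simp add: field_simps)
    ultimately have "q * Pc a b c u v \<le> q * (1/2)" by linarith
    then show "Pc a b c u v \<le> 1" using q by simp
  qed
  have deviation: "measure_pmf.expectation ?\<sigma> (\<lambda>y. Pbar a b c x y) - \<theta> * x \<le> 1/2 - \<theta> * m"
    if x: "0 \<le> x" for x
  proof -
    have "(1 - q) * min 1 (max 0 (Pc a b c x u)) + q * min 1 (max 0 (Pc a b c x v)) \<le> 1/2 + \<theta> * (x - m)"
    proof (rule clamped_average_le[OF _ _ avg])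
      show "q \<le> 1/2 + \<theta> * (x - m)" if "Pc a b c x u < 0"
      proof -
        have "m \<le> x" using lower[OF x] that by fastforce
        then have "0 \<le> \<theta> * (x - m)" using \<theta> by simp
        then show ?thesis using q by linarith
      qed
      show "1 - q \<le> 1/2 + \<theta> * (x - m)" if "Pc a b c x v < 0"
        using upper[OF x] that by simp
    qed (use q in auto)
    then show ?thesis by (simp add: E Pbar_def algebra_simps)
  qed
  have "mixed_equilibrium a b c \<theta> ?\<sigma> ?\<sigma>"
    using fin supp uv deviation Em by (intro mixed_equilibrium_symmetricI) auto
  then show ?thesis
    unfolding symmetric_on_domain_equilibrium_def
    using on_domain_two_point[OF Puv] Em variance_two_point[of q u v] q EpayX_self[OF fin] EpayY_self[OF fin] by simp
qed

lemma quadratic_ge_at_clamped_vertex: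
  fixes \<alpha> \<beta> \<gamma> x :: real
  assumes \<alpha>: "0 < \<alpha>" and x: "0 \<le> x"
  defines "v \<equiv> max 0 (- \<beta> / (2 * \<alpha>))"
  shows "\<alpha> * v^2 + \<beta> * v + \<gamma> \<le> \<alpha> * x^2 + \<beta> * x + \<gamma>"
proof (cases "0 \<le> \<beta>")
  case True
  then have "v = 0" using \<alpha> by (simp add: v_def divide_nonpos_pos)
  then show ?thesis using True x \<alpha> by simp
next
  case False
  then have v: "v = - \<beta> / (2 * \<alpha>)" using \<alpha> by (simp add: v_def max_def field_simps)
  then have "\<beta> = - 2 * \<alpha> * v" using \<alpha> by simp
  then have "\<alpha> * x^2 + \<beta> * x + \<gamma> - (\<alpha> * v^2 + \<beta> * v + \<gamma>) = \<alpha> * (x - v)^2"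
    by (simp add: power2_eq_square algebra_simps)
  moreover have "0 \<le> \<alpha> * (x - v)^2" using \<alpha> by simp
  ultimately show ?thesis by linarith
qed

lemma quadratic_nonneg_on_nonneg:
  fixes \<alpha> \<beta> \<gamma> x :: real
  assumes \<alpha>: "0 < \<alpha>" and \<gamma>: "0 \<le> \<gamma>" and \<beta>: "0 \<le> \<beta> \<or> \<beta>^2 \<le> 4 * \<alpha> * \<gamma>" and x: "0 \<le> x"
  shows "0 \<le> \<alpha> * x^2 + \<beta> * x + \<gamma>"
  using \<beta>
proof
  assume "0 \<le> \<beta>"
  then show ?thesis using \<alpha> \<gamma> x by simp
next
  assume disc: "\<beta>^2 \<le> 4 * \<alpha> * \<gamma>"
  have "4 * \<alpha> * (\<alpha> * x^2 + \<beta> * x + \<gamma>) = (2 * \<alpha> * x + \<beta>)^2 + (4 * \<alpha> * \<gamma> - \<beta>^2)"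
    by (simp add: power2_eq_square algebra_simps)
  also have "\<dots> \<ge> 0" using disc by simp
  finally show ?thesis using \<alpha> by (simp add: zero_le_mult_iff)
qed

lemma symmetric_two_point_equilibrium:
  fixes a b c \<theta> k s :: real
  assumes a: "0 < a" and \<theta>: "0 < \<theta>" and s: "0 < s" "s \<le> k"
    and b: "b = a * k" and c: "c = a * (k^2 + s^2) + \<theta>"
    and at_zero: "0 \<le> Pc a b c 0 (k - s)"
    and at_vertex: "0 \<le> Pc a b c (max 0 (k - \<theta> / (2 * a * s))) (k + s)"
  shows "symmetric_on_domain_equilibrium a b c \<theta> (two_point (1/2) (k - s) (k + s)) k (s^2)"
proof -
  have upper: "0 \<le> Pc a b c x (k + s)" if x: "0 \<le> x" for x
  proof -
    have quad: "Pc a b c y (k + s) = a * s * y^2 + (\<theta> - 2 * a * k * s) * y + Pc a b c 0 (k + s)"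
      for y unfolding Pc_as_quadratic b c by (simp add: power2_eq_square algebra_simps)
    have "max 0 (- (\<theta> - 2 * a * k * s) / (2 * (a * s))) = max 0 (k - \<theta> / (2 * a * s))"
      using a s by (simp add: field_simps)
    then have "Pc a b c (max 0 (k - \<theta> / (2 * a * s))) (k + s) \<le> Pc a b c x (k + s)"
      using quadratic_ge_at_clamped_vertex[of "a * s" x "\<theta> - 2 * a * k * s"] a s x
      unfolding quad[of x] quad[of "max 0 (k - \<theta> / (2 * a * s))"] by simp
    then show ?thesis using at_vertex by simp
  qed
  have lower: "0 \<le> Pc a b c x (k - s)" if x: "0 \<le> x" "x \<le> k" for x
  proof -
    \<comment> \<open>\<open>Pc \<cdot> (k - s)\<close> is concave, hence above its chord on \<open>[0, k]\<close>\<close>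
    have chord: "k * Pc a b c x (k - s)
        = (k - x) * Pc a b c 0 (k - s) + x * Pc a b c k (k - s) + a * s * k * x * (k - x)"
      unfolding Pc_as_quadratic b c by (simp add: power2_eq_square field_simps)
    have "Pc a b c k (k - s) = 1/2 + s * (a * s^2 + \<theta>)"
      unfolding Pc_def b c by (simp add: power2_eq_square algebra_simps)
    then have "0 \<le> Pc a b c k (k - s)" using a s \<theta> by simp
    then have "0 \<le> k * Pc a b c x (k - s)"
      unfolding chord using x a s at_zero by (intro add_nonneg_nonneg mult_nonneg_nonneg) auto
    then show ?thesis using s by (simp add: zero_le_mult_iff)
  qed
  have "symmetric_on_domain_equilibrium a b c \<theta> (two_point (1/2) (k - s) (k + s)) k
      (1/2 * (1 - 1/2) * ((k + s) - (k - s))^2)"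
  proof (rule symmetric_on_domain_equilibrium_two_pointI)
    show "(1 - 1/2) * (k - s) + 1/2 * (k + s) = k" by (simp add: field_simps)
    show "a * ((1 - 1/2) * (k - s)^2 + 1/2 * (k + s)^2) = c - \<theta>"
      unfolding c by (simp add: power2_eq_square field_simps)
  qed (use s \<theta> b lower upper in auto)
  then show ?thesis by (simp add: power2_eq_square)
qed

lemma endpoint_discriminant_bound:
  fixes \<alpha> \<theta> z :: real
  assumes z: "0 < z" and \<theta>: "0 \<le> \<theta>" and steep: "\<theta> < \<alpha> * z" and tz: "2 * \<theta> * z \<le> 1"
    and cap: "\<alpha> * z^2 \<le> 1 - \<theta> * z + sqrt (1 - 2 * \<theta> * z)"
  shows "(\<theta> - \<alpha> * z)^2 \<le> 2 * \<alpha> * (1 - 2 * \<theta> * z)"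
proof -
  define R where "R = sqrt (1 - 2 * \<theta> * z)"
  define t where "t = \<alpha> * z^2"
  have R: "0 \<le> R" "R \<le> 1" "R^2 = 1 - 2 * \<theta> * z"
    unfolding R_def using tz \<theta> z by simp_all
  \<comment> \<open>the roots in \<open>t\<close> of \<open>(t - \<theta> z)\<^sup>2 - 2 t R\<^sup>2\<close> are \<open>1 - \<theta> z \<plusminus> R\<close>\<close>
  have "(t - (1 - \<theta> * z + R)) * (t - (1 - \<theta> * z - R)) = (t - (1 - \<theta> * z))^2 - R^2"
    by (simp add: power2_eq_square algebra_simps)
  also have "\<dots> = (t - \<theta> * z)^2 - 2 * t * R^2"
    unfolding R(3) by (simp add: power2_eq_square algebra_simps)
  finally have factor: "(t - \<theta> * z)^2 - 2 * t * R^2 = (t - (1 - \<theta> * z + R)) * (t - (1 - \<theta> * z - R))"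
    by simp
  have "t - (1 - \<theta> * z + R) \<le> 0"
    using cap unfolding t_def R_def by simp
  moreover have "0 \<le> t - (1 - \<theta> * z - R)"
  proof -
    have "\<theta> * z < t" using steep z unfolding t_def power2_eq_square
      by (metis mult.assoc mult_strict_right_mono)
    moreover have "R^2 \<le> R" using R(1,2) mult_right_mono[of R 1 R] by (simp add: power2_eq_square)
    ultimately show ?thesis using R(3) by simp
  qed
  ultimately have "(t - \<theta> * z)^2 - 2 * t * R^2 \<le> 0"
    unfolding factor by (simp add: mult_nonpos_nonneg)
  moreover have "(t - \<theta> * z)^2 - 2 * t * R^2 = z^2 * ((\<theta> - \<alpha> * z)^2 - 2 * \<alpha> * R^2)"
    unfolding t_def by (simp add: power2_eq_square algebra_simps)
  ultimately have "(\<theta> - \<alpha> * z)^2 - 2 * \<alpha> * R^2 \<le> 0"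
    using z by (simp add: mult_le_0_iff)
  then show ?thesis using R(3) by simp
qed

lemma endpoint_two_point_equilibrium:
  fixes a b c \<theta> k z :: real
  assumes a: "0 < a" and \<theta>: "0 < \<theta>" and k: "0 < k" and kz: "2 * k \<le> z" and tz: "2 * \<theta> * z \<le> 1"
    and b: "b = a * k" and c: "c = a * k * z + \<theta>"
    and cap: "a * z^2 * (z - k) \<le> 1 - \<theta> * z + sqrt (1 - 2 * \<theta> * z)"
  shows "symmetric_on_domain_equilibrium a b c \<theta> (two_point (k / z) 0 z) k (k * z - k^2)"
proof -
  have z: "0 < z" using k kz by simp
  define \<alpha> where "\<alpha> = a * (z - k)"
  have \<alpha>: "0 < \<alpha>" using a k kz by (simp add: \<alpha>_def)
  have upper: "0 \<le> Pc a b c x z" if x: "0 \<le> x" for x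
  proof -
    have quad: "Pc a b c x z = \<alpha> * x^2 + (\<theta> - \<alpha> * z) * x + (1/2 - \<theta> * z)"
      unfolding Pc_as_quadratic b c \<alpha>_def by (simp add: power2_eq_square algebra_simps)
    have "0 \<le> \<theta> - \<alpha> * z \<or> (\<theta> - \<alpha> * z)^2 \<le> 4 * \<alpha> * (1/2 - \<theta> * z)"
    proof (cases "\<theta> < \<alpha> * z")
      case True
      have "\<alpha> * z^2 \<le> 1 - \<theta> * z + sqrt (1 - 2 * \<theta> * z)"
        using cap by (simp add: \<alpha>_def power2_eq_square algebra_simps)
      then show ?thesis
        using endpoint_discriminant_bound[OF z _ True tz] \<theta> by (simp add: algebra_simps)
    qed simp
    then show ?thesis
      unfolding quad using \<alpha> tz x by (intro quadratic_nonneg_on_nonneg) auto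
  qed
  have lower: "0 \<le> Pc a b c x 0" if x: "0 \<le> x" "x \<le> k" for x
  proof -
    have "Pc a b c x 0 = 1/2 + x * (a * k * (z - x) + \<theta>)"
      unfolding Pc_def b c by (simp add: algebra_simps)
    moreover have "0 \<le> a * k * (z - x)" using a k x kz by simp
    ultimately show ?thesis using x \<theta> by simp
  qed
  have "symmetric_on_domain_equilibrium a b c \<theta> (two_point (k / z) 0 z) k (k / z * (1 - k / z) * (z - 0)^2)"
  proof (rule symmetric_on_domain_equilibrium_two_pointI)
    show "(1 - k / z) * 0 + k / z * z = k" using z by simp
    show "a * ((1 - k / z) * 0^2 + k / z * z^2) = c - \<theta>"
      unfolding c using z by (simp add: power2_eq_square)
    show "k / z \<le> 1/2" using kz z by (simp add: field_simps)
  qed (use k z \<theta> b lower upper in auto)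
  moreover have "k / z * (1 - k / z) * (z - 0)^2 = k * z - k^2"
    using z by (simp add: power2_eq_square field_simps)
  ultimately show ?thesis by simp
qed

lemma c_minus_theta_pos:
  fixes a b c \<theta> :: real
  assumes "0 < a" and "(b^2 - a * (c - \<theta>)) / a^2 < 0"
  shows "0 < c - \<theta>"
proof -
  have "b^2 - a * (c - \<theta>) < 0"
    using assms by (simp add: divide_less_0_iff)
  then have "0 < a * (c - \<theta>)"
    using zero_le_power2[of b] by linarith
  then show ?thesis
    using assms(1) by (simp add: zero_less_mult_iff)
qed

lemma symmetric_branch_conditions:
  fixes a b c \<theta> :: real
  assumes a: "0 < a" and b: "0 < b" and \<zeta>: "(b^2 - a * (c - \<theta>)) / a^2 < 0"
    and high: "a \<le> 2 * b^2 / (c - \<theta>)"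
  defines "s \<equiv> sqrt (- ((b^2 - a * (c - \<theta>)) / a^2))"
  shows "0 < s" and "s^2 = - ((b^2 - a * (c - \<theta>)) / a^2)"
    and "c = a * ((b / a)^2 + s^2) + \<theta>" and "s \<le> b / a"
proof -
  show s: "0 < s" "s^2 = - ((b^2 - a * (c - \<theta>)) / a^2)"
    using \<zeta> unfolding s_def by simp_all
  show c: "c = a * ((b / a)^2 + s^2) + \<theta>"
    unfolding s(2) using a by (simp add: field_simps power2_eq_square)
  have "a * (c - \<theta>) \<le> 2 * b^2"
    using high c_minus_theta_pos[OF a \<zeta>] by (simp add: pos_le_divide_eq)
  then have "a * (a * s^2) \<le> a * (a * (b / a)^2)"
    using a unfolding c by (simp add: power2_eq_square field_simps)
  then have "s^2 \<le> (b / a)^2"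
    using a by simp
  then show "s \<le> b / a"
    using s(1) a b by (simp add: power2_le_iff_abs_le)
qed

lemma endpoint_branch_conditions:
  fixes a b c \<theta> :: real
  assumes a: "0 < a" and b: "0 < b" and w: "0 < c - \<theta>"
    and low: "2 * b^2 / (c - \<theta>) \<le> a" and disc: "0 \<le> b * (b - 2*c*\<theta> + 2*\<theta>^2)"
    and cap: "a \<le> (b + c^2 - 3*c*\<theta> + 2*\<theta>^2 + sqrt (b * (b - 2*c*\<theta> + 2*\<theta>^2))) * b^2 / (c - \<theta>)^3"
  defines "z \<equiv> (c - \<theta>) / b"
  shows "2 * (b / a) \<le> z" and "2 * \<theta> * z \<le> 1"
    and "a * z^2 * (z - b / a) \<le> 1 - \<theta> * z + sqrt (1 - 2 * \<theta> * z)"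
proof -
  define w where "w = c - \<theta>"
  have c: "c = w + \<theta>" by (simp add: w_def)
  have z: "z = w / b" by (simp add: z_def w_def)
  show "2 * (b / a) \<le> z"
    using low w a b unfolding z w_def[symmetric] by (simp add: field_simps power2_eq_square)
  have disc_z: "b * (b - 2*c*\<theta> + 2*\<theta>^2) = b^2 * (1 - 2 * \<theta> * z)"
    unfolding z c using b by (simp add: field_simps power2_eq_square)
  then show "2 * \<theta> * z \<le> 1"
    using disc b by (simp add: zero_le_mult_iff)
  define R where "R = sqrt (1 - 2 * \<theta> * z)"
  have sqrt_disc: "sqrt (b * (b - 2*c*\<theta> + 2*\<theta>^2)) = b * R"
    unfolding disc_z R_def real_sqrt_mult using b by simp
  have numerator: "b + c^2 - 3*c*\<theta> + 2*\<theta>^2 = b + w^2 - \<theta> * w"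
    unfolding c by (simp add: power2_eq_square algebra_simps)
  have "a * w^3 \<le> (b + w^2 - \<theta> * w + b * R) * b^2"
    using cap w unfolding sqrt_disc numerator w_def[symmetric] by (simp add: pos_le_divide_eq)
  moreover have "b^3 * (a * z^2 * (z - b / a)) = a * w^3 - b^2 * w^2"
    unfolding z using a b by (simp add: field_simps power2_eq_square power3_eq_cube)
  moreover have "b^3 * (1 - \<theta> * z + R) = (b + w^2 - \<theta> * w + b * R) * b^2 - b^2 * w^2"
    unfolding z using b by (simp add: field_simps power2_eq_square power3_eq_cube)
  ultimately have "b^3 * (a * z^2 * (z - b / a)) \<le> b^3 * (1 - \<theta> * z + R)"
    by linarith
  then show "a * z^2 * (z - b / a) \<le> 1 - \<theta> * z + sqrt (1 - 2 * \<theta> * z)"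
    using b unfolding R_def by simp
qed

theorem proposition8:
  fixes a b c \<theta> :: real
  assumes ha: "a > 0" and hb: "b > 0" and hc: "c > 0" and h\<theta>: "\<theta> > 0"
    and h\<zeta>: "(b^2 - a * (c - \<theta>)) / a^2 < 0"
  defines "\<zeta> \<equiv> (b^2 - a * (c - \<theta>)) / a^2"
    and "\<kappa> \<equiv> b / a"
    and "s \<equiv> sqrt (- ((b^2 - a * (c - \<theta>)) / a^2))"
    and "z \<equiv> (c - \<theta>) / b"
    and "p \<equiv> b^2 / (a * (c - \<theta>))"
    and "xbar \<equiv> max 0 (b / a - \<theta> / (2 * a * sqrt (- ((b^2 - a * (c - \<theta>)) / a^2))))"
    and "aM \<equiv> (b + c^2 - 3*c*\<theta> + 2*\<theta>^2 + sqrt (b * (b - 2*c*\<theta> + 2*\<theta>^2))) * b^2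
               / (c - \<theta>)^3"
    and "\<sigma>S \<equiv> two_point (1/2) (b / a - sqrt (- ((b^2 - a * (c - \<theta>)) / a^2)))
                    (b / a + sqrt (- ((b^2 - a * (c - \<theta>)) / a^2)))"
    and "\<sigma>E \<equiv> two_point (b^2 / (a * (c - \<theta>))) 0 ((c - \<theta>) / b)"
  shows
    "(a \<le> 2 * b^2 / (c - \<theta>) \<and> 0 \<le> Pc a b c 0 (\<kappa> - s) \<and> 0 \<le> Pc a b c xbar (\<kappa> + s)
      \<longrightarrow> mixed_equilibrium a b c \<theta> \<sigma>S \<sigma>S \<and> on_domain a b c \<sigma>S \<sigma>S
        \<and> measure_pmf.expectation \<sigma>S (\<lambda>x. x) = \<kappa>
        \<and> measure_pmf.variance \<sigma>S (\<lambda>x. x) = - \<zeta>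
        \<and> EpayX a b c \<theta> \<sigma>S \<sigma>S = 1/2 - \<theta> * \<kappa>
        \<and> EpayY a b c \<theta> \<sigma>S \<sigma>S = 1/2 - \<theta> * \<kappa>)
   \<and> (2 * b^2 / (c - \<theta>) \<le> a \<and> 0 \<le> b * (b - 2*c*\<theta> + 2*\<theta>^2) \<and> a \<le> aM
      \<longrightarrow> mixed_equilibrium a b c \<theta> \<sigma>E \<sigma>E \<and> on_domain a b c \<sigma>E \<sigma>E
        \<and> measure_pmf.expectation \<sigma>E (\<lambda>x. x) = \<kappa>
        \<and> measure_pmf.variance \<sigma>E (\<lambda>x. x) = - \<zeta>
        \<and> EpayX a b c \<theta> \<sigma>E \<sigma>E = 1/2 - \<theta> * \<kappa>
        \<and> EpayY a b c \<theta> \<sigma>E \<sigma>E = 1/2 - \<theta> * \<kappa>)"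
proof -
  have w: "0 < c - \<theta>"
    using c_minus_theta_pos[OF ha h\<zeta>] .
  have \<kappa>: "0 < \<kappa>" "b = a * \<kappa>"
    using ha hb unfolding \<kappa>_def by simp_all
  have symmetric: "symmetric_on_domain_equilibrium a b c \<theta> \<sigma>S \<kappa> (- \<zeta>)"
    if "a \<le> 2 * b^2 / (c - \<theta>)" "0 \<le> Pc a b c 0 (\<kappa> - s)" "0 \<le> Pc a b c xbar (\<kappa> + s)"
  proof -
    note conditions = symmetric_branch_conditions[OF ha hb h\<zeta> that(1), folded s_def \<kappa>_def \<zeta>_def]
    have "xbar = max 0 (\<kappa> - \<theta> / (2 * a * s))" "\<sigma>S = two_point (1/2) (\<kappa> - s) (\<kappa> + s)"
      unfolding xbar_def \<sigma>S_def s_def \<kappa>_def by simp_all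
    then show ?thesis
      using symmetric_two_point_equilibrium[OF ha h\<theta> conditions(1,4) \<kappa>(2) conditions(3) that(2)] that(3)
      unfolding conditions(2) by simp
  qed
  have endpoint: "symmetric_on_domain_equilibrium a b c \<theta> \<sigma>E \<kappa> (- \<zeta>)"
    if "2 * b^2 / (c - \<theta>) \<le> a" "0 \<le> b * (b - 2*c*\<theta> + 2*\<theta>^2)" "a \<le> aM"
  proof -
    note conditions = endpoint_branch_conditions[OF ha hb w that(1,2) that(3)[unfolded aM_def],
        folded z_def \<kappa>_def]
    have "c = a * \<kappa> * z + \<theta>" "\<kappa> / z = p" "\<kappa> * z - \<kappa>^2 = - \<zeta>"
      unfolding \<kappa>_def z_def p_def \<zeta>_def using ha hb w by (simp_all add: field_simps power2_eq_square)
    then show ?thesis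
      using endpoint_two_point_equilibrium[OF ha h\<theta> \<kappa>(1) conditions(1,2) \<kappa>(2) _ conditions(3)]
      unfolding \<sigma>E_def p_def[symmetric] z_def[symmetric] by simp
  qed
  show ?thesis
    using symmetric endpoint unfolding symmetric_on_domain_equilibrium_def by blast
qed

end
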